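(* Let $m>k>0$ and $n\ge1$ be integers with $\gcd(m,k)=1$. Then $$\frac{m^2n}{mnk+1}=[a_1,\dots,a_h]^-,$$ where the string $(a_1,\dots,a_h)$ is obtained from $(2,n+1,2)$ by a finite (possibly empty) sequence of operations, each of one of the following two types: (1) $(n_1,\dots,n_b)\mapsto(2,n_1,n_2,\dots,n_{b-1},n_b+1)$; (2) $(n_1,\dots,n_b)\mapsto(n_1+1,n_2,\dots,n_b,2)$.
   Context: For integers $b_i\ge2$, $$[b_1,\dots,b_k]^-=b_1-\cfrac{1}{b_2-\cfrac{1}{\ddots-\cfrac{1}{b_k}}}.$$ *)

theory Defs
  imports Complex_Main
begin

fun hjcf :: "int list \<Rightarrow> real" where
  "hjcf [] = 0"
| "hjcf [b] = of_int b"
| "hjcf (b # c # cs) = of_int b - 1 / hjcf (c # cs)"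

definition op1 :: "int list \<Rightarrow> int list" where
  "op1 xs = 2 # butlast xs @ [last xs + 1]"

definition op2 :: "int list \<Rightarrow> int list" where
  "op2 xs = (hd xs + 1) # tl xs @ [2]"

inductive reachable :: "int \<Rightarrow> int list \<Rightarrow> bool" for n :: int where
  base: "reachable n [2, n + 1, 2]"
| step1: "reachable n xs \<Longrightarrow> reachable n (op1 xs)"
| step2: "reachable n xs \<Longrightarrow> reachable n (op2 xs)"

end

theory Submission
  imports Defs
begin

(* Write M(x) for the integer matrix [[x,-1],[1,0]] and M(xs) for the product
   M(x_1)...M(x_h).  If all x_i >= 2 and the first column of M(xs) is (p,q), then p > q > 0
   and [x_1,...,x_h]^- = p/q.  Operation (2) turns M(h,t) into M(h+1) M(t) M(2)
   and operation (1) turns M(t,h) into M(2) M(t) M(h+1).  A direct computation shows that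
   these operations map the matrix
       T(m,k) = [[m^2 n, -(mn(m-k)+1)], [mnk+1, -(nk(m-k)+1)]]
   to T(m+k,k) and T(2m-k,m) respectively, while M(2,n+1,2) = T(2,1).  Every coprime pair
   m > k > 0 arises from (2,1) by the moves (m,k) -> (m+k,k) and (m,k) -> (2m-k,m) (a
   Euclid-type descent), so some reachable string has matrix T(m,k), and its continued
   fraction is m^2 n / (mnk+1). *)

lemma gcd_reflect: "gcd (k::int) (2*k - m) = gcd m k"
proof -
  have "gcd k (2*k - m) = gcd ((k - m) + k) k" by (simp add: gcd.commute algebra_simps)
  also have "\<dots> = gcd m k" by (simp only: gcd_add1 gcd_diff2)
  finally show ?thesis .
qed

(* Every coprime pair m > k > 0 is obtained from (2,1) by the moves (m,k) -> (m+k,k)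
   and (m,k) -> (2m-k,m); the descent inverts whichever move applies. *)
lemma coprime_pair_induct [consumes 3, case_names base shift reflect]:
  fixes m k :: int
  assumes "k < m" "0 < k" "gcd m k = 1"
    and base: "P 2 1"
    and shift: "\<And>m k. k < m \<Longrightarrow> 0 < k \<Longrightarrow> gcd m k = 1 \<Longrightarrow> P m k \<Longrightarrow> P (m + k) k"
    and reflect: "\<And>m k. k < m \<Longrightarrow> 0 < k \<Longrightarrow> gcd m k = 1 \<Longrightarrow> P m k \<Longrightarrow> P (2*m - k) m"
  shows "P m k"
  using assms(1-3)
proof (induction "nat m" arbitrary: m k rule: less_induct)
  case less
  consider "m = 2*k" | "2*k < m" | "m < 2*k" by linarith
  then show ?case
  proof cases
    case 1
    with less.prems have "k = 1" by simp
    with 1 show ?thesis using base by simp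
  next
    case 2
    have "gcd (m - k) k = 1" using less.prems(3) by (simp only: gcd_diff1)
    moreover have "P (m - k) k"
      using less.hyps[of "m - k" k] less.prems 2 \<open>gcd (m - k) k = 1\<close> by simp
    ultimately show ?thesis using shift[of k "m - k"] less.prems 2 by simp
  next
    case 3
    have "gcd k (2*k - m) = 1" using less.prems(3) by (simp only: gcd_reflect)
    moreover have "P k (2*k - m)"
      using less.hyps[of k "2*k - m"] less.prems 3 \<open>gcd k (2*k - m) = 1\<close> by simp
    ultimately show ?thesis using reflect[of "2*k - m" k] less.prems 3 by simp
  qed
qed

(* Integer 2x2 matrices, the quadruple (a,b,c,d) standing for [[a,b],[c,d]]. *)

type_synonym mat2 = "int \<times> int \<times> int \<times> int"

fun mat2_mult :: "mat2 \<Rightarrow> mat2 \<Rightarrow> mat2" where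
  "mat2_mult (a, b, c, d) (e, f, g, h) = (a*e + b*g, a*f + b*h, c*e + d*g, c*f + d*h)"

lemma mat2_mult_assoc: "mat2_mult (mat2_mult A B) C = mat2_mult A (mat2_mult B C)"
  by (cases A; cases B; cases C) (simp add: algebra_simps)

lemma mat2_mult_one_right: "mat2_mult A (1, 0, 0, 1) = A"
  by (cases A) simp

lemma mat2_mult_one_left: "mat2_mult (1, 0, 0, 1) A = A"
  by (cases A) simp

definition hj_step :: "int \<Rightarrow> mat2" where
  "hj_step x = (x, -1, 1, 0)"

fun hj_matrix :: "int list \<Rightarrow> mat2" where
  "hj_matrix [] = (1, 0, 0, 1)"
| "hj_matrix (x # xs) = mat2_mult (hj_step x) (hj_matrix xs)"

lemma hj_matrix_append: "hj_matrix (xs @ ys) = mat2_mult (hj_matrix xs) (hj_matrix ys)"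
  by (induction xs) (simp_all add: mat2_mult_assoc mat2_mult_one_left)

lemma hj_matrix_snoc: "hj_matrix (xs @ [y]) = mat2_mult (hj_matrix xs) (hj_step y)"
  by (simp add: hj_matrix_append mat2_mult_one_right)

lemma hjcf_hj_matrix:
  assumes "xs \<noteq> []" "\<forall>x\<in>set xs. 2 \<le> x" "hj_matrix xs = (p, p', q, q')"
  shows "q < p \<and> 0 < q \<and> hjcf xs = real_of_int p / real_of_int q"
  using assms
proof (induction xs arbitrary: p p' q q' rule: hjcf.induct)
  case 1
  then show ?case by simp
next
  case (2 b)
  then show ?case by (simp add: hj_step_def)
next
  case (3 b c cs)
  obtain r r' s s' where rs: "hj_matrix (c # cs) = (r, r', s, s')"
    by (cases "hj_matrix (c # cs)") auto
  with 3 have IH: "s < r" "0 < s" "hjcf (c # cs) = real_of_int r / real_of_int s"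
    by auto
  from 3 rs have pq: "p = b*r - s" "q = r" by (auto simp: hj_step_def)
  have "2 * r \<le> b * r" using 3 IH by (intro mult_right_mono) auto
  then have "q < p" using IH pq by linarith
  moreover have "hjcf (b # c # cs) = real_of_int p / real_of_int q"
  proof -
    have "1 / hjcf (c # cs) = real_of_int s / real_of_int r" using IH by simp
    then show ?thesis using IH by (simp only: hjcf.simps(3)) (simp add: pq field_simps)
  qed
  ultimately show ?case using IH pq by simp
qed

lemma reachable_entries:
  assumes "reachable n xs" "1 \<le> n"
  shows "xs \<noteq> [] \<and> (\<forall>x\<in>set xs. 2 \<le> x)"
  using assms
proof (induction rule: reachable.induct)
  case base
  then show ?case by simp
next
  case (step1 xs)
  then have "2 \<le> last xs + 1" using last_in_set by fastforce
  with step1 show ?case by (auto simp: op1_def dest: in_set_butlastD)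
next
  case (step2 xs)
  then show ?case by (cases xs) (auto simp: op2_def)
qed

(* The matrix of a string representing m^2 n / (mnk+1), together with the second column
   that makes the induction work. *)
definition target :: "int \<Rightarrow> int \<Rightarrow> int \<Rightarrow> mat2" where
  "target n m k = (m^2*n, -(m*n*(m - k) + 1), m*n*k + 1, -(n*k*(m - k) + 1))"

lemma hj_matrix_base: "hj_matrix [2, n + 1, 2] = target n 2 1"
  by (simp add: hj_step_def target_def algebra_simps)

lemma hj_matrix_op2:
  assumes "xs \<noteq> []" "hj_matrix xs = target n m k"
  shows "hj_matrix (op2 xs) = target n (m + k) k"
proof -
  obtain h t where xs: "xs = h # t" using assms(1) by (cases xs) auto
  obtain a b c d where t: "hj_matrix t = (a, b, c, d)" by (cases "hj_matrix t") auto
  have "(h*a - c, h*b - d, a, b) = target n m k"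
    using assms(2) by (simp add: xs t hj_step_def)
  then have a: "a = m*n*k + 1" and b: "b = -(n*k*(m - k) + 1)"
    and c: "c = h*a - m^2*n" and d: "d = h*b + (m*n*(m - k) + 1)"
    by (auto simp: target_def)
  have "op2 xs = ((h + 1) # t) @ [2]" by (simp add: op2_def xs)
  then have "hj_matrix (op2 xs) = mat2_mult (mat2_mult (hj_step (h + 1)) (a, b, c, d)) (hj_step 2)"
    by (simp add: hj_matrix_snoc t mat2_mult_assoc)
  also have "\<dots> = target n (m + k) k"
    by (simp add: c d a b hj_step_def target_def power2_eq_square algebra_simps)
  finally show ?thesis .
qed

lemma hj_matrix_op1:
  assumes "xs \<noteq> []" "hj_matrix xs = target n m k"
  shows "hj_matrix (op1 xs) = target n (2*m - k) m"
proof -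
  obtain t h where xs: "xs = t @ [h]" using assms(1) by (cases xs rule: rev_cases) auto
  obtain a b c d where t: "hj_matrix t = (a, b, c, d)" by (cases "hj_matrix t") auto
  have "(a*h + b, -a, c*h + d, -c) = target n m k"
    using assms(2) by (simp add: xs t hj_matrix_snoc hj_step_def)
  then have a: "a = m*n*(m - k) + 1" and c: "c = n*k*(m - k) + 1"
    and b: "b = m^2*n - a*h" and d: "d = m*n*k + 1 - c*h"
    by (auto simp: target_def)
  have "op1 xs = 2 # (t @ [h + 1])" by (simp add: op1_def xs)
  then have "hj_matrix (op1 xs) = mat2_mult (hj_step 2) (mat2_mult (a, b, c, d) (hj_step (h + 1)))"
    by (simp add: hj_matrix_snoc t)
  also have "\<dots> = target n (2*m - k) m"
    by (simp add: b d a c hj_step_def target_def power2_eq_square algebra_simps)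
  finally show ?thesis .
qed

theorem lemma3p3:
  fixes m k n :: int
  assumes "m > k" and "k > 0" and "n \<ge> 1" and "gcd m k = 1"
  shows "\<exists>as. reachable n as \<and>
           real_of_int (m^2 * n) / real_of_int (m * n * k + 1) = hjcf as"
proof -
  have "\<exists>xs. reachable n xs \<and> hj_matrix xs = target n m k"
    using assms(1,2,4)
  proof (induction m k rule: coprime_pair_induct)
    case base
    show ?case using reachable.base hj_matrix_base by blast
  next
    case (shift m k)
    then obtain xs where "reachable n xs" "hj_matrix xs = target n m k" by blast
    then show ?case
      using reachable.step2 hj_matrix_op2 reachable_entries assms(3) by blast
  next
    case (reflect m k)
    then obtain xs where "reachable n xs" "hj_matrix xs = target n m k" by blast
    then show ?case
      using reachable.step1 hj_matrix_op1 reachable_entries assms(3) by blast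
  qed
  then obtain xs where xs: "reachable n xs" "hj_matrix xs = target n m k" by blast
  have "hjcf xs = real_of_int (m^2 * n) / real_of_int (m * n * k + 1)"
    using hjcf_hj_matrix[of xs] reachable_entries[OF xs(1) assms(3)] xs(2)
    by (simp add: target_def mult.commute)
  with xs(1) show ?thesis by metis
qed

end
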